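(* Let $n\ge3$ and let $W\subset\mathbb{C}^n$ be a real $3$-dimensional subspace. Given any unit vector $x\in\mathbb{C}^n$ and any unit vector $e\perp\mathrm{span}_{\mathbb{R}}\{x,Jx\}$, there exists $V\in\mathrm{SU}(n)\cdot W$ with $x,e\in V$.
   Context: $J$ denotes multiplication by $i$ on $\mathbb{C}^n=\mathbb{R}^{2n}$, with the standard real inner product. $\mathrm{SU}(n)\cdot W$ is the orbit of $W$ in the Grassmannian of real $3$-planes under the standard action of $\mathrm{SU}(n)$. *)

theory Defs
  imports "HOL-Analysis.Analysis"
begin

text \<open>C^n is modelled as complex^'n, viewed as a real inner product space
  (inner x y = sum of Re (x_k * cnj (y_k)), the standard real inner product on R^2n).\<close>

definition J :: "complex^'n \<Rightarrow> complex^'n" where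
  "J x = (\<chi> k. \<i> * x $ k)"

definition conj_transpose :: "complex^'n^'m \<Rightarrow> complex^'m^'n" where
  "conj_transpose A = (\<chi> i j. cnj (A $ j $ i))"

definition SU :: "(complex^'n^'n) set" where
  "SU = {U. conj_transpose U ** U = mat 1 \<and> det U = 1}"

definition SU_orbit :: "(complex^'n) set \<Rightarrow> (complex^'n) set set" where
  "SU_orbit W = {(\<lambda>v. U *v v) ` W | U. U \<in> SU}"

end

theory Submission
  imports Defs
begin

text \<open>Let \<open>h\<close> be the Hermitian product on \<open>\<complex>\<^sup>n\<close>, so that \<open>Re h(a,b) = \<langle>a,b\<rangle>\<close> and
  \<open>Im h(a,b) = \<langle>a,Jb\<rangle>\<close>. The hypothesis says that \<open>x, e\<close> is a Hermitian orthonormal pair,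
  and \<open>W\<close> contains such a pair as well: for a unit vector \<open>w\<^sub>1 \<in> W\<close>, the real orthogonal
  complement of \<open>span{w\<^sub>1, Jw\<^sub>1}\<close> has codimension at most 2 and therefore meets the
  3-dimensional \<open>W\<close> nontrivially. A Householder reflection followed by a phase maps a unit
  vector to a standard basis vector while fixing everything orthogonal to both, so two such
  steps map any orthonormal pair to \<open>(e\<^sub>i, e\<^sub>j)\<close>. A phase on a third coordinate \<open>k\<close>, which
  \<open>n \<ge> 3\<close> provides, corrects the determinant to 1. Hence \<open>SU(n)\<close> acts transitively on
  orthonormal pairs, and some \<open>U \<in> SU(n)\<close> carries the pair in \<open>W\<close> to \<open>(x, e)\<close>.\<close>

definition cinner :: "complex^'n \<Rightarrow> complex^'n \<Rightarrow> complex" where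
  "cinner a b = (\<Sum>k\<in>UNIV. a$k * cnj (b$k))"

definition cinner_orthonormal :: "complex^'n \<Rightarrow> complex^'n \<Rightarrow> bool" where
  "cinner_orthonormal a b \<longleftrightarrow> cinner a a = 1 \<and> cinner b b = 1 \<and> cinner b a = 0"

lemma inner_eq_Re_cinner: "inner a b = Re (cinner a b)"
  by (simp add: cinner_def inner_vec_def inner_complex_def Re_sum)

lemma inner_J_eq_Im_cinner: "inner a (J b) = Im (cinner a b)"
proof -
  have "inner p (\<i> * q) = Im (p * cnj q)" for p q :: complex
    by (simp add: inner_complex_def algebra_simps)
  then show ?thesis
    unfolding cinner_def inner_vec_def J_def Im_sum by simp
qed

lemma cinner_eq_inner_inner_J:
  "cinner a b = complex_of_real (inner a b) + \<i> * complex_of_real (inner a (J b))"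
  using inner_J_eq_Im_cinner[of a b] inner_eq_Re_cinner[of a b] by (simp add: complex_eq_iff)

lemma cinner_self: "cinner a a = complex_of_real ((norm a)\<^sup>2)"
proof -
  have "Im (cinner a a) = 0"
    by (simp add: cinner_def Im_sum)
  moreover have "Re (cinner a a) = (norm a)\<^sup>2"
    by (simp add: inner_eq_Re_cinner[symmetric] power2_norm_eq_inner)
  ultimately show ?thesis
    by (simp add: complex_eq_iff)
qed

lemma norm_eq_1_iff_cinner_self: "norm a = 1 \<longleftrightarrow> cinner a a = 1"
proof -
  have "(norm a)\<^sup>2 = 1 \<longleftrightarrow> norm a = 1"
    using power2_eq_iff_nonneg[of "norm a" 1] by simp
  then show ?thesis
    by (metis cinner_self of_real_eq_1_iff)
qed

lemma cinner_orthonormal_iff: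
  "cinner_orthonormal a b \<longleftrightarrow>
     norm a = 1 \<and> norm b = 1 \<and> inner b a = 0 \<and> inner b (J a) = 0"
  by (simp add: cinner_orthonormal_def norm_eq_1_iff_cinner_self cinner_eq_inner_inner_J complex_eq_iff)

lemma cinner_commute: "cinner b a = cnj (cinner a b)"
  by (simp add: cinner_def cnj_sum mult_ac)

lemma cinner_diff_left: "cinner (a - b) c = cinner a c - cinner b c"
  by (simp add: cinner_def algebra_simps sum_subtractf)

lemma cinner_diff_right: "cinner a (b - c) = cinner a b - cinner a c"
  by (simp add: cinner_def algebra_simps sum_subtractf)

lemma cinner_scale_left: "cinner (s *s a) b = s * cinner a b"
  by (simp add: cinner_def sum_distrib_left mult_ac)

lemma cinner_axis_right: "cinner z (axis i s) = z$i * cnj s"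
  by (simp add: cinner_def axis_def if_distrib[of cnj] if_distrib[of "\<lambda>x. _ * x"] cong: if_cong)

lemma subspace_has_nonzero_orthogonal_vector:
  fixes W :: "'a::euclidean_space set"
  assumes "subspace W" "finite S" "card S < dim W"
  obtains v where "v \<in> W" "v \<noteq> 0" "\<And>s. s \<in> S \<Longrightarrow> inner s v = 0"
proof -
  define T where "T = {y \<in> UNIV. \<forall>s\<in>span S. orthogonal s y}"
  have "subspace T"
    by (auto simp: T_def subspace_def orthogonal_def inner_add_right)
  have "dim T + dim (span S) = dim (UNIV :: 'a set)"
    unfolding T_def by (rule dim_subspace_orthogonal_to_vectors) auto
  moreover have "dim (span S) \<le> card S"
    using dim_le_card[OF order.refl assms(2)] by simp
  moreover have "dim {x + y |x y. x \<in> W \<and> y \<in> T} + dim (W \<inter> T) = dim W + dim T"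
    by (rule dim_sums_Int[OF assms(1) \<open>subspace T\<close>])
  moreover have "dim {x + y |x y. x \<in> W \<and> y \<in> T} \<le> dim (UNIV :: 'a set)"
    by (rule dim_subset) simp
  ultimately have "\<not> W \<inter> T \<subseteq> {0}"
    using assms(3) dim_eq_0[of "W \<inter> T"] by linarith
  then obtain v where "v \<in> W" "v \<in> T" "v \<noteq> 0"
    by blast
  moreover have "inner s v = 0" if "s \<in> S" for s
    using \<open>v \<in> T\<close> that by (auto simp: T_def orthogonal_def span_base)
  ultimately show thesis
    using that by blast
qed

lemma subspace_has_cinner_orthonormal_pair:
  fixes W :: "(complex^'n) set"
  assumes "subspace W" "dim W \<ge> 3"
  obtains w1 w2 where "w1 \<in> W" "w2 \<in> W" "cinner_orthonormal w1 w2"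
proof -
  obtain w0 where "w0 \<in> W" "w0 \<noteq> 0"
    using subspace_has_nonzero_orthogonal_vector[OF assms(1), of "{}"] assms(2) by auto
  define w1 where "w1 = w0 /\<^sub>R norm w0"
  have "w1 \<in> W" "norm w1 = 1"
    using \<open>w0 \<in> W\<close> \<open>w0 \<noteq> 0\<close> assms(1) by (auto simp: w1_def subspace_scale)
  have "finite {w1, J w1}" "card {w1, J w1} < dim W"
    using assms(2) by (simp_all add: card_insert_if)
  then obtain v where "v \<in> W" "v \<noteq> 0" "\<And>s. s \<in> {w1, J w1} \<Longrightarrow> inner s v = 0"
    using subspace_has_nonzero_orthogonal_vector[OF assms(1)] by blast
  then have v: "v \<in> W" "v \<noteq> 0" "inner w1 v = 0" "inner (J w1) v = 0"
    by auto
  define w2 where "w2 = v /\<^sub>R norm v"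
  have "w2 \<in> W" "norm w2 = 1"
    using v assms(1) by (auto simp: w2_def subspace_scale)
  moreover have "inner w2 w1 = 0" "inner w2 (J w1) = 0"
    using v by (auto simp: w2_def inner_commute)
  ultimately show thesis
    using that \<open>w1 \<in> W\<close> \<open>norm w1 = 1\<close> by (simp add: cinner_orthonormal_iff)
qed

definition unitary :: "complex^'n^'n \<Rightarrow> bool" where
  "unitary U \<longleftrightarrow> conj_transpose U ** U = mat 1"

lemma conj_transpose_mult:
  "conj_transpose (A ** B) = conj_transpose B ** conj_transpose (A::complex^'n^'n)"
  by (simp add: conj_transpose_def matrix_matrix_mult_def vec_eq_iff cnj_sum mult.commute)

lemma conj_transpose_conj_transpose [simp]: "conj_transpose (conj_transpose A) = (A::complex^'n^'n)"
  by (simp add: conj_transpose_def vec_eq_iff)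

lemma det_conj_transpose: "det (conj_transpose A) = cnj (det (A::complex^'n^'n))"
proof -
  have "conj_transpose A = transpose (\<chi> i j. cnj (A$i$j))"
    by (simp add: conj_transpose_def transpose_def vec_eq_iff)
  then have "det (conj_transpose A) = det (\<chi> i j. cnj (A$i$j))"
    by simp
  also have "\<dots> = cnj (det A)"
    by (simp add: det_def cnj_sum cnj_prod)
  finally show ?thesis .
qed

lemma unitary_mult: "unitary A \<Longrightarrow> unitary B \<Longrightarrow> unitary (A ** B)"
  unfolding unitary_def conj_transpose_mult by (metis matrix_mul_assoc matrix_mul_lid)

lemma unitary_conj_transpose: "unitary A \<Longrightarrow> unitary (conj_transpose A)"
  unfolding unitary_def by (simp add: matrix_left_right_inverse)

lemma unitary_det: "unitary U \<Longrightarrow> cnj (det U) * det U = 1"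
  by (metis det_I det_conj_transpose det_mul unitary_def)

lemma unitary_inverse_apply: "unitary U \<Longrightarrow> U *v z = w \<Longrightarrow> conj_transpose U *v w = z"
  by (auto simp: unitary_def matrix_vector_mul_assoc)

lemma cinner_matrix_vector_mult_left: "cinner (A *v z) w = cinner z (conj_transpose A *v w)"
proof -
  have "cinner (A *v z) w = (\<Sum>k\<in>UNIV. \<Sum>l\<in>UNIV. A$k$l * z$l * cnj (w$k))"
    unfolding cinner_def matrix_vector_mult_def by (simp add: sum_distrib_right)
  also have "\<dots> = (\<Sum>l\<in>UNIV. \<Sum>k\<in>UNIV. A$k$l * z$l * cnj (w$k))"
    by (rule sum.swap)
  also have "\<dots> = cinner z (conj_transpose A *v w)"
    unfolding cinner_def matrix_vector_mult_def conj_transpose_def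
    by (simp add: sum_distrib_left cnj_sum mult_ac)
  finally show ?thesis .
qed

lemma unitary_cinner: "unitary U \<Longrightarrow> cinner (U *v z) (U *v w) = cinner z w"
  by (simp add: cinner_matrix_vector_mult_left unitary_def matrix_vector_mul_assoc)

lemma SU_iff: "U \<in> SU \<longleftrightarrow> unitary U \<and> det U = 1"
  by (simp add: SU_def unitary_def)

lemma SU_mult: "U \<in> SU \<Longrightarrow> V \<in> SU \<Longrightarrow> U ** V \<in> SU"
  by (simp add: SU_iff unitary_mult det_mul)

lemma SU_conj_transpose: "U \<in> SU \<Longrightarrow> conj_transpose U \<in> SU"
  by (simp add: SU_iff unitary_conj_transpose det_conj_transpose)

definition diag_matrix :: "('n \<Rightarrow> complex) \<Rightarrow> complex^'n^'n" where
  "diag_matrix d = (\<chi> j k. if j = k then d j else 0)"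

lemma diag_matrix_apply: "diag_matrix d *v z = (\<chi> j. d j * z$j)"
  unfolding diag_matrix_def matrix_vector_mult_def
  by (simp add: vec_eq_iff if_distrib[of "\<lambda>x. x * _"] sum.delta cong: if_cong)

lemma det_diag_matrix: "det (diag_matrix d) = prod d UNIV"
  by (subst det_diagonal) (auto simp: diag_matrix_def)

lemma unitary_diag_matrix:
  fixes d :: "'n::finite \<Rightarrow> complex"
  assumes "\<And>j. cnj (d j) * d j = 1"
  shows "unitary (diag_matrix d)"
proof -
  have "conj_transpose (diag_matrix d) ** diag_matrix d = diag_matrix (\<lambda>j. cnj (d j) * d j)"
    unfolding diag_matrix_def conj_transpose_def matrix_matrix_mult_def
    by (simp add: vec_eq_iff if_distrib[of cnj] if_distrib[of "\<lambda>x. x * _"] sum.delta cong: if_cong)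
  also have "\<dots> = mat 1"
    by (simp add: assms diag_matrix_def mat_def)
  finally show ?thesis
    by (simp add: unitary_def)
qed

lemma phase_diag_matrix:
  fixes \<phi> :: complex and k :: "'n::finite"
  defines "D \<equiv> diag_matrix (\<lambda>l. if l = k then \<phi> else 1)"
  shows "D *v axis k s = axis k (\<phi> * s)"
    and "l \<noteq> k \<Longrightarrow> D *v axis l s = axis l s"
    and "z$k = 0 \<Longrightarrow> D *v z = z"
    and "det D = \<phi>"
proof -
  show "D *v axis k s = axis k (\<phi> * s)" "l \<noteq> k \<Longrightarrow> D *v axis l s = axis l s"
    "z$k = 0 \<Longrightarrow> D *v z = z"
    by (auto simp: D_def diag_matrix_apply axis_def vec_eq_iff)
  have "prod (\<lambda>l. if l = k then \<phi> else 1) UNIV = \<phi>"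
    by (simp add: prod.If_cases)
  then show "det D = \<phi>"
    by (simp add: D_def det_diag_matrix)
qed

text \<open>The reflection \<open>I - 2uu\<^sup>*/|u|\<^sup>2\<close>; for \<open>u = 0\<close> it is the identity, as \<open>2/0 = 0\<close>.\<close>

definition householder :: "complex^'n \<Rightarrow> complex^'n^'n" where
  "householder u =
     (\<chi> j k. (if j = k then 1 else 0) - complex_of_real (2 / (norm u)\<^sup>2) * u$j * cnj (u$k))"

lemma householder_apply:
  "householder u *v z = z - (complex_of_real (2 / (norm u)\<^sup>2) * cinner z u) *s u"
proof -
  define c where "c = complex_of_real (2 / (norm u)\<^sup>2)"
  have "(householder u *v z)$j = z$j - c * cinner z u * u$j" for j
  proof -
    have "(householder u *v z)$j = (\<Sum>k\<in>UNIV. (if j = k then z$k else 0) - c * u$j * (cnj (u$k) * z$k))"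
      unfolding householder_def matrix_vector_mult_def vec_lambda_beta c_def[symmetric]
      by (intro sum.cong) (auto simp: algebra_simps)
    then show ?thesis
      by (simp add: sum_subtractf sum_distrib_left[symmetric] cinner_def mult_ac)
  qed
  then show ?thesis
    unfolding c_def[symmetric] by (simp add: vec_eq_iff)
qed

lemma householder_apply_orthogonal: "cinner z u = 0 \<Longrightarrow> householder u *v z = z"
  by (simp add: householder_apply)

lemma householder_coeff:
  "u \<noteq> 0 \<Longrightarrow> complex_of_real (2 / (norm u)\<^sup>2) * cinner u u = 2"
  by (simp add: cinner_self)

lemma householder_swaps:
  assumes "cinner a a = cinner b b" "cnj (cinner a b) = cinner a b"
  shows "householder (a - b) *v a = b"
proof (cases "a = b")
  case False
  define u where "u = a - b"
  have "cinner b a = cinner a b"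
    using assms(2) by (simp add: cinner_commute[of b a])
  then have "cinner u u = 2 * cinner a u"
    using assms(1) by (simp add: u_def cinner_diff_left cinner_diff_right)
  then have "2 * (complex_of_real (2 / (norm u)\<^sup>2) * cinner a u) = 2 * 1"
    using householder_coeff[of u] False by (simp add: u_def mult_ac)
  then have "complex_of_real (2 / (norm u)\<^sup>2) * cinner a u = 1"
    by (metis mult_cancel_left zero_neq_numeral)
  then show ?thesis
    unfolding householder_apply u_def[symmetric] by (simp add: u_def)
qed (simp add: householder_apply)

lemma unitary_householder: "unitary (householder u)"
proof -
  have "householder u *v (householder u *v z) = z" for z
  proof (cases "u = 0")
    case False
    have "complex_of_real (2 / (norm u)\<^sup>2) * cinner z u * cinner u u = 2 * cinner z u"
      using householder_coeff[OF False] by (metis mult.commute mult.left_commute)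
    then have h: "cinner (householder u *v z) u = - cinner z u"
      unfolding householder_apply cinner_diff_left cinner_scale_left by simp
    have "householder u *v (householder u *v z)
        = householder u *v z - (complex_of_real (2 / (norm u)\<^sup>2) * (- cinner z u)) *s u"
      by (subst householder_apply) (simp only: h)
    also have "\<dots> = z"
      by (simp add: householder_apply vec_eq_iff algebra_simps)
    finally show ?thesis .
  qed (simp add: householder_apply)
  then have "householder u ** householder u = mat 1"
    by (simp add: matrix_eq matrix_vector_mul_assoc[symmetric])
  moreover have "conj_transpose (householder u) = householder u"
    by (simp add: householder_def conj_transpose_def vec_eq_iff mult_ac)
  ultimately show ?thesis by (simp add: unitary_def)
qed

lemma exists_phase_rotating_to_modulus:
  "\<exists>\<phi>. cnj \<phi> * \<phi> = 1 \<and> z * cnj \<phi> = complex_of_real (cmod z)"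
proof (cases "z = 0")
  case False
  then have "cmod z \<noteq> 0" by simp
  then show ?thesis
    by (intro exI[of _ "z / complex_of_real (cmod z)"])
      (simp add: complex_norm_square[symmetric] power2_eq_square field_simps mult_ac)
qed (rule exI[of _ 1], simp)

lemma unitary_maps_unit_vector_to_axis:
  assumes "cinner a a = 1"
  obtains U where "unitary U" "U *v a = axis i 1"
    "\<And>z. cinner z a = 0 \<Longrightarrow> z$i = 0 \<Longrightarrow> U *v z = z"
proof -
  obtain \<phi> where \<phi>: "cnj \<phi> * \<phi> = 1" "a$i * cnj \<phi> = complex_of_real (cmod (a$i))"
    using exists_phase_rotating_to_modulus by blast
  define b where "b = axis i \<phi>"
  define D where "D = diag_matrix (\<lambda>l. if l = i then cnj \<phi> else 1)"
  define U where "U = D ** householder (a - b)"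
  have "cinner a a = cinner b b"
    using \<phi>(1) assms by (simp add: b_def cinner_axis_right mult.commute)
  moreover have "cnj (cinner a b) = cinner a b"
    by (simp add: b_def cinner_axis_right \<phi>(2))
  ultimately have "householder (a - b) *v a = b"
    by (rule householder_swaps)
  then have "U *v a = axis i 1"
    using \<phi>(1) phase_diag_matrix(1)[of i "cnj \<phi>" \<phi>]
    by (simp add: U_def D_def b_def matrix_vector_mul_assoc[symmetric])
  moreover have "unitary U"
    unfolding U_def D_def
    using \<phi>(1) by (intro unitary_mult unitary_householder unitary_diag_matrix) (auto simp: mult.commute)
  moreover have "U *v z = z" if "cinner z a = 0" "z$i = 0" for z
  proof -
    have "cinner z (a - b) = 0"
      using that by (simp add: b_def cinner_diff_right cinner_axis_right)
    then show ?thesis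
      using that(2) phase_diag_matrix(3)[of z i "cnj \<phi>"]
      by (simp add: U_def D_def matrix_vector_mul_assoc[symmetric] householder_apply_orthogonal)
  qed
  ultimately show thesis
    using that by blast
qed

lemma unitary_maps_orthonormal_pair_to_axes:
  fixes a b :: "complex^'n"
  assumes "cinner_orthonormal a b" "i \<noteq> j"
  obtains P where "unitary P" "P *v a = axis i 1" "P *v b = axis j 1"
proof -
  obtain P1 where P1: "unitary P1" "P1 *v a = axis i 1"
    using assms(1) unitary_maps_unit_vector_to_axis unfolding cinner_orthonormal_def by metis
  define b' where "b' = P1 *v b"
  have "cinner b' b' = 1"
    using assms(1) unitary_cinner[OF P1(1)] by (simp add: b'_def cinner_orthonormal_def)
  then obtain P2 where P2: "unitary P2" "P2 *v b' = axis j 1"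
    "\<And>z. cinner z b' = 0 \<Longrightarrow> z$j = 0 \<Longrightarrow> P2 *v z = z"
    using unitary_maps_unit_vector_to_axis by metis
  have "cinner b' (axis i 1) = 0"
    using assms(1) unitary_cinner[OF P1(1), of b a] P1(2)
    by (simp add: b'_def cinner_orthonormal_def)
  then have "cinner (axis i 1) b' = 0"
    by (metis cinner_commute complex_cnj_zero)
  moreover have "(axis i 1 :: complex^'n) $ j = 0"
    using assms(2) by (simp add: axis_def)
  ultimately have "P2 *v axis i 1 = axis i 1"
    by (rule P2(3))
  then show thesis
    using that[of "P2 ** P1"] unitary_mult[OF P2(1) P1(1)] P1(2) P2(2)
    by (simp add: matrix_vector_mul_assoc[symmetric] b'_def[symmetric])
qed

lemma SU_maps_orthonormal_pair_to_axes:
  fixes a b :: "complex^'n"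
  assumes "cinner_orthonormal a b" "i \<noteq> j" "k \<noteq> i" "k \<noteq> j"
  obtains U where "U \<in> SU" "U *v a = axis i 1" "U *v b = axis j 1"
proof -
  obtain P where P: "unitary P" "P *v a = axis i 1" "P *v b = axis j 1"
    using unitary_maps_orthonormal_pair_to_axes[OF assms(1,2)] by metis
  define D where "D = diag_matrix (\<lambda>l. if l = k then cnj (det P) else 1)"
  have "unitary D"
    unfolding D_def using unitary_det[OF P(1)]
    by (intro unitary_diag_matrix) (auto simp: mult.commute)
  moreover have "det D = cnj (det P)"
    unfolding D_def by (rule phase_diag_matrix(4))
  then have "det (D ** P) = 1"
    using unitary_det[OF P(1)] by (simp add: det_mul)
  ultimately have "D ** P \<in> SU"
    using P(1) by (simp add: SU_iff unitary_mult)
  moreover have "D *v axis i 1 = axis i 1" "D *v axis j 1 = axis j 1"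
    unfolding D_def using assms(3,4) by (auto intro: phase_diag_matrix(2))
  then have "(D ** P) *v a = axis i 1" "(D ** P) *v b = axis j 1"
    using P by (simp_all add: matrix_vector_mul_assoc[symmetric])
  ultimately show thesis by (rule that)
qed

lemma exists_three_distinct:
  assumes "CARD('n) \<ge> 3"
  obtains i j k :: "'n::finite" where "i \<noteq> j" "k \<noteq> i" "k \<noteq> j"
proof -
  obtain i :: 'n where True by blast
  have "card (UNIV - {i}) \<ge> 2"
    using assms by (simp add: card_Diff_singleton)
  then obtain j where j: "j \<noteq> i"
    by (metis DiffE all_not_in_conv card.empty insertI1 not_numeral_le_zero)
  have "card (UNIV - {i, j}) \<ge> 1"
    using assms j by (simp add: card_Diff_subset)
  then obtain k where "k \<in> UNIV - {i, j}"
    by (metis all_not_in_conv card.empty not_one_le_zero)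
  then show thesis
    using that[of i j k] j by auto
qed

lemma SU_transitive_on_orthonormal_pairs:
  fixes a b c d :: "complex^'n"
  assumes "CARD('n) \<ge> 3" "cinner_orthonormal a b" "cinner_orthonormal c d"
  obtains U where "U \<in> SU" "U *v a = c" "U *v b = d"
proof -
  obtain i j k :: 'n where ijk: "i \<noteq> j" "k \<noteq> i" "k \<noteq> j"
    using exists_three_distinct[OF assms(1)] by metis
  obtain A where A: "A \<in> SU" "A *v a = axis i 1" "A *v b = axis j 1"
    using SU_maps_orthonormal_pair_to_axes[OF assms(2) ijk] by metis
  obtain C where C: "C \<in> SU" "C *v c = axis i 1" "C *v d = axis j 1"
    using SU_maps_orthonormal_pair_to_axes[OF assms(3) ijk] by metis
  have "unitary C"
    using C(1) by (simp add: SU_iff)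
  then have "(conj_transpose C ** A) *v a = c" "(conj_transpose C ** A) *v b = d"
    using A(2,3) C(2,3) unitary_inverse_apply by (auto simp: matrix_vector_mul_assoc[symmetric])
  moreover have "conj_transpose C ** A \<in> SU"
    using A(1) C(1) by (intro SU_mult SU_conj_transpose)
  ultimately show thesis
    using that by blast
qed

theorem lemma11p4:
  fixes W :: "(complex^'n) set" and x e :: "complex^'n"
  assumes "CARD('n) \<ge> 3"
    and "subspace W" and "dim W = 3"
    and "norm x = 1" and "norm e = 1"
    and "\<forall>v\<in>span {x, J x}. inner e v = 0"
  shows "\<exists>V\<in>SU_orbit W. x \<in> V \<and> e \<in> V"
proof -
  have "cinner_orthonormal x e"
    using assms(4-6) by (simp add: cinner_orthonormal_iff span_base)
  obtain w1 w2 where "w1 \<in> W" "w2 \<in> W" "cinner_orthonormal w1 w2"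
    using subspace_has_cinner_orthonormal_pair[OF assms(2)] assms(3) by auto
  then obtain U where "U \<in> SU" "U *v w1 = x" "U *v w2 = e"
    using SU_transitive_on_orthonormal_pairs[OF assms(1)] \<open>cinner_orthonormal x e\<close> by metis
  then have "x \<in> (\<lambda>v. U *v v) ` W" "e \<in> (\<lambda>v. U *v v) ` W"
    using \<open>w1 \<in> W\<close> \<open>w2 \<in> W\<close> by force+
  moreover have "(\<lambda>v. U *v v) ` W \<in> SU_orbit W"
    using \<open>U \<in> SU\<close> by (auto simp: SU_orbit_def)
  ultimately show ?thesis by blast
qed

end
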